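(* Let $P$ be a multiprogram in which at most one thread per process calls deliver, and let $\widehat C$ be a finite computation of $\mathrm{TS}(P)$ satisfying $\mathrm{NW}$. Then for all processes $\widehat p,\widehat r$, the writes performed by $\widehat p$ to its variable $T[\widehat r]$, taken in program order, write strictly increasing values.
   Context: $\mathrm{NW}$ (message-passing network model): processes communicate by $\mathrm{send}(s,d,m)$/$\mathrm{recv}(s,d,m)$ of uniquely identified messages; messages from a given sender to a given receiver are received in the order sent (FIFO channels), each message is received at most once and only after being sent; threads within a process share local variables whose accesses are sequentially consistent. Formally $\mathrm{NW}(C)$ holds iff for each process there is a valid total order of its operations extending $\to_{\mathrm{HappensBefore}}$, the transitive closure of program order, send-before-receive, FIFO-channel order (receives of $m,m'$ from $s$ to $d$ ordered as the sends), and writes-into order on local variables; and messages are received iff sent. The timestamp transformation $\mathrm{TS}$. Each process $\widehat p$ has: integer local-counter (initially 0); arrays $\mathrm{counter}[\cdot]$ and $T[\cdot]$ indexed by processes, initially 0; a priority queue $\mathrm{priorityQ}[l]$ for each label $l\in L$ ordered by (timestamp, source) lexicographically; a FIFO queue $\mathrm{fifoQ}[\widehat q]$ for each process $\widehat q$. Queue elements are $[u,ts,c,src]$. $\mathrm{bcast}(u,l)$ ($l\in L\cup\{\bot\}$): send $[\mathrm{LBR},u,l]$ to $\widehat p$ itself. ProcessQueueElement$(qe,l,s)$: enqueue $qe$ into $\mathrm{priorityQ}[l]$ if $l\neq\bot$, else into $\mathrm{fifoQ}[s]$. HandleMessage: receive a message from some $\widehat s$; if $[\mathrm{LBR},u,l]$: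 $T[\widehat p]\gets T[\widehat p]+1$, local-counter $\gets$ local-counter$+1$, $qe\gets[u,T[\widehat p],\text{local-counter},\widehat p]$, ProcessQueueElement$(qe,l,\widehat p)$, send $[\mathrm{ORD},l,qe]$ to every other process; if $[\mathrm{TSUPD},t,\widehat q]$: $T[\widehat q]\gets t$; if $[\mathrm{ORD},l,qe]$: $T[\widehat s]\gets qe.ts$, ProcessQueueElement$(qe,l,\widehat s)$, and if $qe.ts>T[\widehat p]$ then $T[\widehat p]\gets qe.ts$ and send $[\mathrm{TSUPD},T[\widehat p],\widehat p]$ to every other process. CanExtract$(\mathrm{priorityQ}[l])$ holds iff the queue is nonempty and its minimum $qe$ satisfies $qe.c=\mathrm{counter}[qe.src]+1$ and $qe.ts\le T[\widehat q]$ for all $\widehat q$. CanDequeue$(\mathrm{fifoQ}[\widehat q])$ holds iff nonempty and its head $qe$ satisfies $qe.c=\mathrm{counter}[qe.src]+1$. deliver: while no priority queue satisfies CanExtract and no FIFO queue satisfies CanDequeue, call HandleMessage; then remove an element $qe$ from such a queue (extractmin, or FIFO dequeue), set $\mathrm{counter}[qe.src]\gets qe.c$, and return $qe.u$ with its label ($\bot$ for FIFO). Reads/writes of the original program are mapped to themselves. The only writes to $T[\cdot]$ are those listed above. *)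

theory Defs
  imports Main
begin

text \<open>Operational model of the timestamp transformation TS(P) running over an NW
  (FIFO message-passing) network.  Processes are elements of a finite linearly
  ordered type 'p (the order is used for the (timestamp, source) tie-break);
  labels L are the type 'l and L \<union> {bot} is 'l option (None = bot).\<close>

record ('u,'p) qelem =
  qu   :: 'u
  qts  :: int
  qc   :: int
  qsrc :: 'p

datatype ('u,'l,'p) msg =
    LBR 'u "'l option"
  | TSUPD int 'p
  | ORD "'l option" "('u,'p) qelem"

record ('u,'l,'p) pstate =
  localc    :: int
  counter   :: "'p \<Rightarrow> int"
  Tv        :: "'p \<Rightarrow> int"
  priorityQ :: "'l \<Rightarrow> ('u,'p) qelem list"
  fifoQ     :: "'p \<Rightarrow> ('u,'p) qelem list"

text \<open>chan s d is the FIFO channel from s to d (messages sent but not yet received).\<close>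
record ('u,'l,'p) config =
  pst  :: "'p \<Rightarrow> ('u,'l,'p) pstate"
  chan :: "'p \<Rightarrow> 'p \<Rightarrow> ('u,'l,'p) msg list"

definition init_pstate :: "('u,'l,'p) pstate" where
  "init_pstate = \<lparr>localc = 0, counter = (\<lambda>_. 0), Tv = (\<lambda>_. 0),
                  priorityQ = (\<lambda>_. []), fifoQ = (\<lambda>_. [])\<rparr>"

definition init_config :: "('u,'l,'p) config" where
  "init_config = \<lparr>pst = (\<lambda>_. init_pstate), chan = (\<lambda>_ _. [])\<rparr>"

definition process_qe ::
  "('u,'p) qelem \<Rightarrow> 'l option \<Rightarrow> 'p \<Rightarrow> ('u,'l,'p) pstate \<Rightarrow> ('u,'l,'p) pstate" where
  "process_qe qe l s st =
     (case l of
        Some l' \<Rightarrow> st\<lparr>priorityQ := (priorityQ st)(l' := priorityQ st l' @ [qe])\<rparr>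
      | None \<Rightarrow> st\<lparr>fifoQ := (fifoQ st)(s := fifoQ st s @ [qe])\<rparr>)"

definition key_le :: "('u,'p::linorder) qelem \<Rightarrow> ('u,'p) qelem \<Rightarrow> bool" where
  "key_le a b \<longleftrightarrow> qts a < qts b \<or> (qts a = qts b \<and> qsrc a \<le> qsrc b)"

definition is_min :: "('u,'p::linorder) qelem list \<Rightarrow> ('u,'p) qelem \<Rightarrow> bool" where
  "is_min q qe \<longleftrightarrow> qe \<in> set q \<and> (\<forall>x\<in>set q. key_le qe x)"

definition extractable :: "('u,'l,'p) pstate \<Rightarrow> ('u,'p) qelem \<Rightarrow> bool" where
  "extractable st qe \<longleftrightarrow> qc qe = counter st (qsrc qe) + 1 \<and> (\<forall>q. qts qe \<le> Tv st q)"

definition CanExtract :: "('u,'l,'p::linorder) pstate \<Rightarrow> 'l \<Rightarrow> bool" where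
  "CanExtract st l \<longleftrightarrow> (\<exists>qe. is_min (priorityQ st l) qe \<and> extractable st qe)"

definition CanDequeue :: "('u,'l,'p) pstate \<Rightarrow> 'p \<Rightarrow> bool" where
  "CanDequeue st q \<longleftrightarrow> fifoQ st q \<noteq> [] \<and>
     qc (hd (fifoQ st q)) = counter st (qsrc (hd (fifoQ st q))) + 1"

definition blocked :: "('u,'l,'p::linorder) pstate \<Rightarrow> bool" where
  "blocked st \<longleftrightarrow> (\<forall>l. \<not> CanExtract st l) \<and> (\<forall>q. \<not> CanDequeue st q)"

definition send_others ::
  "'p \<Rightarrow> ('u,'l,'p) msg \<Rightarrow> ('p \<Rightarrow> 'p \<Rightarrow> ('u,'l,'p) msg list) \<Rightarrow> ('p \<Rightarrow> 'p \<Rightarrow> ('u,'l,'p) msg list)" where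
  "send_others p m ch = (\<lambda>s d. if s = p \<and> d \<noteq> p then ch s d @ [m] else ch s d)"

definition recv_head ::
  "'p \<Rightarrow> 'p \<Rightarrow> ('p \<Rightarrow> 'p \<Rightarrow> ('u,'l,'p) msg list) \<Rightarrow> ('p \<Rightarrow> 'p \<Rightarrow> ('u,'l,'p) msg list)" where
  "recv_head s d ch = ch(s := (ch s)(d := tl (ch s d)))"

text \<open>One step of the system.  The event list records the writes to the arrays T
  performed in that step, as triples (writer process p, index r, value written),
  in program order.\<close>
inductive step ::
  "('u,'l,'p::{finite,linorder}) config \<Rightarrow> ('p \<times> 'p \<times> int) list \<Rightarrow> ('u,'l,'p) config \<Rightarrow> bool"
where
  bcast:
    "step c [] (c\<lparr>chan := (chan c)(p := (chan c p)(p := chan c p p @ [LBR u l]))\<rparr>)"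
| handle_lbr:
    "\<lbrakk> blocked (pst c p); chan c s p = LBR u l # rest; st = pst c p;
       t' = Tv st p + 1; lc' = localc st + 1;
       qe = \<lparr>qu = u, qts = t', qc = lc', qsrc = p\<rparr>;
       st' = process_qe qe l p (st\<lparr>Tv := (Tv st)(p := t'), localc := lc'\<rparr>) \<rbrakk>
     \<Longrightarrow> step c [(p, p, t')]
           \<lparr>pst = (pst c)(p := st'), chan = send_others p (ORD l qe) (recv_head s p (chan c))\<rparr>"
| handle_tsupd:
    "\<lbrakk> blocked (pst c p); chan c s p = TSUPD t q # rest; st = pst c p \<rbrakk>
     \<Longrightarrow> step c [(p, q, t)]
           \<lparr>pst = (pst c)(p := st\<lparr>Tv := (Tv st)(q := t)\<rparr>), chan = recv_head s p (chan c)\<rparr>"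
| handle_ord_upd:
    "\<lbrakk> blocked (pst c p); chan c s p = ORD l qe # rest; st = pst c p;
       st1 = process_qe qe l s (st\<lparr>Tv := (Tv st)(s := qts qe)\<rparr>);
       qts qe > Tv st1 p \<rbrakk>
     \<Longrightarrow> step c [(p, s, qts qe), (p, p, qts qe)]
           \<lparr>pst = (pst c)(p := st1\<lparr>Tv := (Tv st1)(p := qts qe)\<rparr>),
            chan = send_others p (TSUPD (qts qe) p) (recv_head s p (chan c))\<rparr>"
| handle_ord_noupd:
    "\<lbrakk> blocked (pst c p); chan c s p = ORD l qe # rest; st = pst c p;
       st1 = process_qe qe l s (st\<lparr>Tv := (Tv st)(s := qts qe)\<rparr>);
       \<not> qts qe > Tv st1 p \<rbrakk>
     \<Longrightarrow> step c [(p, s, qts qe)]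
           \<lparr>pst = (pst c)(p := st1), chan = recv_head s p (chan c)\<rparr>"
| extract_pq:
    "\<lbrakk> st = pst c p; is_min (priorityQ st l) qe; extractable st qe \<rbrakk>
     \<Longrightarrow> step c []
           (c\<lparr>pst := (pst c)(p := st\<lparr>priorityQ := (priorityQ st)(l := remove1 qe (priorityQ st l)),
                                      counter := (counter st)(qsrc qe := qc qe)\<rparr>)\<rparr>)"
| dequeue_fq:
    "\<lbrakk> st = pst c p; fifoQ st q = qe # rest; qc qe = counter st (qsrc qe) + 1 \<rbrakk>
     \<Longrightarrow> step c []
           (c\<lparr>pst := (pst c)(p := st\<lparr>fifoQ := (fifoQ st)(q := rest),
                                      counter := (counter st)(qsrc qe := qc qe)\<rparr>)\<rparr>)"

inductive run :: "('u,'l,'p::{finite,linorder}) config \<Rightarrow> ('p \<times> 'p \<times> int) list \<Rightarrow> bool" where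
  run_init: "run init_config []"
| run_step: "\<lbrakk> run c w; step c e c' \<rbrakk> \<Longrightarrow> run c' (w @ e)"

end

theory Submission
  imports Defs
begin

text \<open>Each process only learns other processes' clocks from their messages. Along every
  channel from s to a different process d, the value d holds for T[s], followed by the
  timestamps of the ORD and TSUPD messages in transit, is strictly increasing and bounded by
  s's own clock T_s[s]: a sender only broadcasts a timestamp after raising its own clock to it,
  and FIFO delivery pops the channel in order. Hence every write of T[s] by d, caused by
  receiving the head of that channel, is larger than the value it overwrites, and writes
  of a process to its own clock only ever raise it.\<close>

lemma sorted_wrt_append_last:
  assumes "transp R" and "sorted_wrt R xs" and "sorted_wrt R (last xs # ys)" and "xs \<noteq> []"
  shows "sorted_wrt R (xs @ ys)"
  using assms(2-4)
proof (induction xs rule: induct_list012)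
  case (3 a b xs)
  then show ?case using assms(1) by (auto dest: transpD)
qed simp_all

fun is_LBR :: "('u,'l,'p) msg \<Rightarrow> bool" where
  "is_LBR (LBR _ _) = True"
| "is_LBR _ = False"

fun net_msg :: "'p \<Rightarrow> ('u,'l,'p) msg \<Rightarrow> bool" where
  "net_msg s (LBR _ _) = False"
| "net_msg s (TSUPD _ q) = (q = s)"
| "net_msg s (ORD _ _) = True"

text \<open>LBR requests carry no timestamp; they never travel between distinct processes.\<close>

fun msg_ts :: "('u,'l,'p) msg \<Rightarrow> int" where
  "msg_ts (LBR _ _) = 0"
| "msg_ts (TSUPD t _) = t"
| "msg_ts (ORD _ qe) = qts qe"

text \<open>The values d has seen or will see for the clock of s, oldest first.\<close>

definition clock_trail ::
  "('p \<Rightarrow> 'p \<Rightarrow> int) \<Rightarrow> ('p \<Rightarrow> 'p \<Rightarrow> ('u,'l,'p) msg list) \<Rightarrow> 'p \<Rightarrow> 'p \<Rightarrow> int list" where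
  "clock_trail T ch s d = T d s # map msg_ts (ch s d)"

definition clock_inv :: "('p \<Rightarrow> 'p \<Rightarrow> int) \<Rightarrow> ('p \<Rightarrow> 'p \<Rightarrow> ('u,'l,'p) msg list) \<Rightarrow> bool" where
  "clock_inv T ch \<longleftrightarrow>
     (\<forall>p. \<forall>m\<in>set (ch p p). is_LBR m) \<and>
     (\<forall>s d. s \<noteq> d \<longrightarrow> (\<forall>m\<in>set (ch s d). net_msg s m) \<and>
        sorted_wrt (<) (clock_trail T ch s d) \<and> (\<forall>t\<in>set (clock_trail T ch s d). t \<le> T s s))"

lemma clock_invI:
  assumes "\<And>p m. m \<in> set (ch p p) \<Longrightarrow> is_LBR m"
    and "\<And>s d m. s \<noteq> d \<Longrightarrow> m \<in> set (ch s d) \<Longrightarrow> net_msg s m"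
    and "\<And>s d. s \<noteq> d \<Longrightarrow> sorted_wrt (<) (clock_trail T ch s d)"
    and "\<And>s d t. s \<noteq> d \<Longrightarrow> t \<in> set (clock_trail T ch s d) \<Longrightarrow> t \<le> T s s"
  shows "clock_inv T ch"
  using assms unfolding clock_inv_def by blast

context
  fixes T :: "'p \<Rightarrow> 'p \<Rightarrow> int" and ch :: "'p \<Rightarrow> 'p \<Rightarrow> ('u,'l,'p) msg list"
  assumes inv: "clock_inv T ch"
begin

lemma clock_inv_self_chan: "m \<in> set (ch p p) \<Longrightarrow> is_LBR m"
  using inv unfolding clock_inv_def by blast

lemma clock_inv_net_msg: "s \<noteq> d \<Longrightarrow> m \<in> set (ch s d) \<Longrightarrow> net_msg s m"
  using inv unfolding clock_inv_def by blast

lemma clock_inv_sorted: "s \<noteq> d \<Longrightarrow> sorted_wrt (<) (clock_trail T ch s d)"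
  using inv unfolding clock_inv_def by blast

lemma clock_inv_bounded: "s \<noteq> d \<Longrightarrow> t \<in> set (clock_trail T ch s d) \<Longrightarrow> t \<le> T s s"
  using inv unfolding clock_inv_def by blast

lemma clock_inv_sender_ne: "ch s d = m # rest \<Longrightarrow> \<not> is_LBR m \<Longrightarrow> s \<noteq> d"
  using clock_inv_self_chan by (metis list.set_intros(1))

lemma clock_inv_LBR_self: "ch s d = LBR u l # rest \<Longrightarrow> s = d"
  using clock_inv_net_msg by (metis list.set_intros(1) net_msg.simps(1))

lemma clock_inv_head_fresh: "s \<noteq> d \<Longrightarrow> ch s d = m # rest \<Longrightarrow> T d s < msg_ts m"
  using clock_inv_sorted[of s d] by (simp add: clock_trail_def)

lemma clock_inv_change_self_chans:
  assumes "\<And>p m. m \<in> set (ch' p p) \<Longrightarrow> is_LBR m" and "\<And>s d. s \<noteq> d \<Longrightarrow> ch' s d = ch s d"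
  shows "clock_inv T ch'"
proof (rule clock_invI)
  have "clock_trail T ch' s d = clock_trail T ch s d" if "s \<noteq> d" for s d
    using assms(2)[OF that] by (simp add: clock_trail_def)
  then show "\<And>s d. s \<noteq> d \<Longrightarrow> sorted_wrt (<) (clock_trail T ch' s d)"
    and "\<And>s d t. s \<noteq> d \<Longrightarrow> t \<in> set (clock_trail T ch' s d) \<Longrightarrow> t \<le> T s s"
    using clock_inv_sorted clock_inv_bounded by auto
qed (use assms clock_inv_net_msg in auto)

lemma clock_inv_bcast: "clock_inv T (ch(p := (ch p)(p := ch p p @ [LBR u l])))"
  by (rule clock_inv_change_self_chans) (auto simp: clock_inv_self_chan split: if_splits)

lemma clock_inv_recv_self: "clock_inv T (recv_head p p ch)"
proof (rule clock_inv_change_self_chans)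
  show "m \<in> set (recv_head p p ch q q) \<Longrightarrow> is_LBR m" for q m
    using clock_inv_self_chan[of _ p] clock_inv_self_chan[of _ q]
    by (cases "ch p p") (auto simp: recv_head_def split: if_splits)
qed (auto simp: recv_head_def)

lemma clock_inv_recv:
  assumes sp: "s \<noteq> p" and head: "ch s p = m # rest"
  shows "clock_inv (T(p := (T p)(s := msg_ts m))) (recv_head s p ch)"
proof -
  let ?T' = "T(p := (T p)(s := msg_ts m))" and ?ch' = "recv_head s p ch"
  have received: "clock_trail T ch s p = T p s # clock_trail ?T' ?ch' s p"
    using sp head by (simp add: clock_trail_def recv_head_def)
  have unchanged: "clock_trail ?T' ?ch' x y = clock_trail T ch x y" if "\<not> (x = s \<and> y = p)" for x y
    using that by (auto simp: clock_trail_def recv_head_def)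
  have diag: "?T' x x = T x x" for x
    using sp by simp
  have subset: "set (?ch' x y) \<subseteq> set (ch x y)" for x y
    using head by (auto simp: recv_head_def)
  show ?thesis
  proof (rule clock_invI)
    fix x y :: 'p assume xy: "x \<noteq> y"
    show "sorted_wrt (<) (clock_trail ?T' ?ch' x y)"
      using clock_inv_sorted[OF xy] clock_inv_sorted[OF sp] received unchanged[of x y] by fastforce
    show "t \<le> ?T' x x" if "t \<in> set (clock_trail ?T' ?ch' x y)" for t
      using that clock_inv_bounded[OF xy] clock_inv_bounded[OF sp] received unchanged[of x y] diag by fastforce
    show "net_msg x m'" if "m' \<in> set (?ch' x y)" for m'
      using that subset clock_inv_net_msg[OF xy] by blast
  qed (use subset clock_inv_self_chan in blast)
qed

lemma clock_inv_send:
  assumes fresh: "T p p < msg_ts m" and net: "net_msg p m"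
  shows "clock_inv (T(p := (T p)(p := msg_ts m))) (send_others p m ch)"
proof -
  let ?T' = "T(p := (T p)(p := msg_ts m))" and ?ch' = "send_others p m ch"
  have sent: "clock_trail ?T' ?ch' p y = clock_trail T ch p y @ [msg_ts m]" if "y \<noteq> p" for y
    using that by (simp add: clock_trail_def send_others_def)
  have unchanged: "clock_trail ?T' ?ch' x y = clock_trail T ch x y" if "x \<noteq> p" "x \<noteq> y" for x y
    using that by (simp add: clock_trail_def send_others_def)
  have below: "t < msg_ts m" if "y \<noteq> p" "t \<in> set (clock_trail T ch p y)" for y t
    using clock_inv_bounded[OF that(1)[symmetric] that(2)] fresh by simp
  show ?thesis
  proof (rule clock_invI)
    fix x y :: 'p assume xy: "x \<noteq> y"
    show "sorted_wrt (<) (clock_trail ?T' ?ch' x y)"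
    proof (cases "x = p")
      case True
      then show ?thesis using xy sent[of y] clock_inv_sorted[OF xy] below[of y] by (auto simp: sorted_wrt_append)
    qed (use xy unchanged clock_inv_sorted in auto)
    show "t \<le> ?T' x x" if "t \<in> set (clock_trail ?T' ?ch' x y)" for t
    proof (cases "x = p")
      case True
      then show ?thesis using that xy sent[of y] below[of y] by (fastforce simp: less_imp_le)
    qed (use that xy unchanged clock_inv_bounded in auto)
    show "net_msg x m'" if "m' \<in> set (?ch' x y)" for m'
      using that xy net clock_inv_net_msg[OF xy] by (auto simp: send_others_def split: if_splits)
  qed (use clock_inv_self_chan in \<open>auto simp: send_others_def\<close>)
qed

end

abbreviation config_clock_inv :: "('u,'l,'p) config \<Rightarrow> bool" where
  "config_clock_inv c \<equiv> clock_inv (\<lambda>p. Tv (pst c p)) (chan c)"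

lemma clock_inv_init: "config_clock_inv init_config"
  by (simp add: clock_inv_def clock_trail_def init_config_def init_pstate_def)

lemma Tv_process_qe [simp]: "Tv (process_qe qe l s st) = Tv st"
  by (cases l) (simp_all add: process_qe_def)

lemma step_preserves_clock_inv:
  fixes c :: "('u,'l,'p::{finite,linorder}) config"
  assumes inv: "config_clock_inv c" and "step c e c'"
  shows "config_clock_inv c'"
  using \<open>step c e c'\<close>
proof cases
  case (bcast p u l)
  then show ?thesis using clock_inv_bcast[OF inv] by simp
next
  case (handle_lbr p s u l rest st t' lc' qe st')
  let ?T = "\<lambda>q. Tv (pst c q)" and ?m = "ORD l qe"
  have "s = p" using handle_lbr clock_inv_LBR_self[OF inv] by blast
  have view: "(\<lambda>q. Tv (pst c' q)) = ?T(p := (?T p)(p := msg_ts ?m))"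
    using handle_lbr by (auto simp: fun_eq_iff)
  have chan: "chan c' = send_others p ?m (recv_head p p (chan c))"
    using handle_lbr \<open>s = p\<close> by simp
  have fresh: "?T p p < msg_ts ?m" using handle_lbr by simp
  show ?thesis unfolding view chan by (rule clock_inv_send[OF clock_inv_recv_self[OF inv] fresh]) simp
next
  case (handle_tsupd p s t q rest st)
  let ?T = "\<lambda>q. Tv (pst c q)" and ?m = "TSUPD t q :: ('u,'l,'p) msg"
  have sp: "s \<noteq> p" using handle_tsupd clock_inv_sender_ne[OF inv] by force
  then have "q = s" using handle_tsupd clock_inv_net_msg[OF inv sp] by force
  then have view: "(\<lambda>q. Tv (pst c' q)) = ?T(p := (?T p)(s := msg_ts ?m))"
    using handle_tsupd by (auto simp: fun_eq_iff)
  have chan: "chan c' = recv_head s p (chan c)" using handle_tsupd by simp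
  show ?thesis unfolding view chan by (rule clock_inv_recv[OF inv sp]) (use handle_tsupd in simp)
next
  case (handle_ord_upd p s l qe rest st st1)
  let ?T = "\<lambda>q. Tv (pst c q)" and ?m = "ORD l qe" and ?u = "TSUPD (qts qe) p :: ('u,'l,'p) msg"
  let ?T1 = "?T(p := (?T p)(s := msg_ts ?m))"
  have sp: "s \<noteq> p" using handle_ord_upd clock_inv_sender_ne[OF inv] by force
  have view: "(\<lambda>q. Tv (pst c' q)) = ?T1(p := (?T1 p)(p := msg_ts ?u))"
    using handle_ord_upd by (auto simp: fun_eq_iff)
  have chan: "chan c' = send_others p ?u (recv_head s p (chan c))"
    using handle_ord_upd by simp
  have fresh: "?T1 p p < msg_ts ?u" using handle_ord_upd sp by simp
  show ?thesis unfolding view chan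
    by (rule clock_inv_send[OF clock_inv_recv[OF inv sp] fresh]) (use handle_ord_upd in simp_all)
next
  case (handle_ord_noupd p s l qe rest st st1)
  let ?T = "\<lambda>q. Tv (pst c q)" and ?m = "ORD l qe"
  have sp: "s \<noteq> p" using handle_ord_noupd clock_inv_sender_ne[OF inv] by force
  have view: "(\<lambda>q. Tv (pst c' q)) = ?T(p := (?T p)(s := msg_ts ?m))"
    using handle_ord_noupd by (auto simp: fun_eq_iff)
  have chan: "chan c' = recv_head s p (chan c)" using handle_ord_noupd by simp
  show ?thesis unfolding view chan by (rule clock_inv_recv[OF inv sp]) (use handle_ord_noupd in simp)
next
  case extract_pq
  then have "(\<lambda>q. Tv (pst c' q)) = (\<lambda>q. Tv (pst c q))" and "chan c' = chan c"
    by (auto simp: fun_eq_iff)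
  then show ?thesis using inv by simp
next
  case dequeue_fq
  then have "(\<lambda>q. Tv (pst c' q)) = (\<lambda>q. Tv (pst c q))" and "chan c' = chan c"
    by (auto simp: fun_eq_iff)
  then show ?thesis using inv by simp
qed

lemma run_clock_inv: "run c w \<Longrightarrow> config_clock_inv c"
  by (induction rule: run.induct) (use clock_inv_init step_preserves_clock_inv in blast)+

definition T_writes :: "'p \<Rightarrow> 'p \<Rightarrow> ('p \<times> 'p \<times> int) list \<Rightarrow> int list" where
  "T_writes p r w = [v. (q, r', v) \<leftarrow> w, q = p \<and> r' = r]"

lemma T_writes_Nil [simp]: "T_writes p r [] = []"
  and T_writes_Cons [simp]:
    "T_writes p r ((q, r', v) # w) = (if q = p \<and> r' = r then v # T_writes p r w else T_writes p r w)"
  and T_writes_append [simp]: "T_writes p r (w @ e) = T_writes p r w @ T_writes p r e"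
  by (simp_all add: T_writes_def)

lemma step_Tv_last_write:
  "step c e c' \<Longrightarrow> Tv (pst c' p) r = last (Tv (pst c p) r # T_writes p r e)"
  by (induction rule: step.cases) auto

lemma step_T_writes_fresh:
  fixes c :: "('u,'l,'p::{finite,linorder}) config"
  assumes inv: "config_clock_inv c" and "step c e c'"
  shows "sorted_wrt (<) (Tv (pst c p) r # T_writes p r e)"
  using \<open>step c e c'\<close>
proof cases
  case (handle_tsupd q s t q' rest st)
  then have "s \<noteq> q" using clock_inv_sender_ne[OF inv] by force
  then show ?thesis
    using handle_tsupd clock_inv_net_msg[OF inv] clock_inv_head_fresh[OF inv] by force
next
  case (handle_ord_upd q s l qe rest st st1)
  then have "s \<noteq> q" using clock_inv_sender_ne[OF inv] by force
  then show ?thesis using handle_ord_upd clock_inv_head_fresh[OF inv] by force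
next
  case (handle_ord_noupd q s l qe rest st st1)
  then have "s \<noteq> q" using clock_inv_sender_ne[OF inv] by force
  then show ?thesis using handle_ord_noupd clock_inv_head_fresh[OF inv] by force
qed auto

lemma run_T_writes:
  assumes "run c w"
  shows "sorted_wrt (<) (0 # T_writes p r w) \<and> Tv (pst c p) r = last (0 # T_writes p r w)"
  using assms
proof induction
  case run_init
  then show ?case by (simp add: init_config_def init_pstate_def)
next
  case (run_step c w e c')
  let ?xs = "0 # T_writes p r w" and ?ys = "T_writes p r e"
  have fresh: "sorted_wrt (<) (last ?xs # ?ys)"
    using run_step step_T_writes_fresh[OF run_clock_inv] by metis
  have "sorted_wrt (<) (?xs @ ?ys)"
    using sorted_wrt_append_last[OF _ _ fresh] run_step.IH by (simp add: transp_on_less)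
  moreover have "Tv (pst c' p) r = last (?xs @ ?ys)"
    using step_Tv_last_write[OF run_step.hyps(2)] run_step.IH by (simp add: last_append)
  ultimately show ?case by simp
qed

theorem mainTheorem5:
  fixes c :: "('u,'l,'p::{finite,linorder}) config"
    and w :: "('p \<times> 'p \<times> int) list"
    and p r :: 'p
  assumes "run c w"
  shows "sorted_wrt (<) [v. (q, r', v) \<leftarrow> w, q = p \<and> r' = r]"
  using run_T_writes[OF assms, of p r] by (simp add: T_writes_def)

end
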